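(* Let $(X,d)$ be a complete metric space and $T\colon X\to X$ a mapping for which there exists $k<\kappa(X)$ such that for all $(x,y)\in X\times X$ with $D(x,o(y))\le D(x,o(x))$ and all $n\in\mathbb N$, $$\lim_{m\to\infty} D(T^nx,o(T^my))\le k\,D(x,o(y)).$$ Then either all the orbits are unbounded or there exists $x\in X$ with $Tx=x$.
   Context: The orbit of $x$ under $T$ is $o(x)=\{x\}\cup\{T^nx:n\in\mathbb N\}$; for nonempty $C\subseteq X$, $D(x,C)=\sup\{d(x,y):y\in C\}$. $B(x,r)$ denotes the closed ball. For $c\ge1$, balls in $X$ are $c$-regular if for every $k'<c$ there are $\mu,\alpha\in(0,1)$ such that for all $x,y\in X$ and $r>0$ with $d(x,y)\ge(1-\mu)r$ there exists $z\in X$ with $B(x,(1+\mu)r)\cap B(y,k'(1+\mu)r)\subseteq B(z,\alpha r)$. The Lifschitz characteristic is $\kappa(X)=\sup\{c\ge1:\text{balls in }X\text{ are }c\text{-regular}\}$. *)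

theory Defs
  imports "HOL-Analysis.Analysis" "HOL-Library.Extended_Real"
begin

definition orbit :: "('a \<Rightarrow> 'a) \<Rightarrow> 'a \<Rightarrow> 'a set" where
  "orbit T x = {x} \<union> {(T ^^ n) x | n. n \<ge> 1}"

definition Dsup :: "'a::metric_space \<Rightarrow> 'a set \<Rightarrow> ereal" where
  "Dsup x C = (SUP y\<in>C. ereal (dist x y))"

definition balls_regular :: "'a::metric_space itself \<Rightarrow> real \<Rightarrow> bool" where
  "balls_regular _ c \<longleftrightarrow>
     (\<forall>k'. k' < c \<longrightarrow>
        (\<exists>\<mu> \<alpha>. 0 < \<mu> \<and> \<mu> < 1 \<and> 0 < \<alpha> \<and> \<alpha> < 1 \<and>
          (\<forall>(x::'a) y r. r > 0 \<and> dist x y \<ge> (1 - \<mu>) * r \<longrightarrow>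
             (\<exists>z. cball x ((1 + \<mu>) * r) \<inter> cball y (k' * (1 + \<mu>) * r) \<subseteq> cball z (\<alpha> * r)))))"

definition lifschitz_char :: "'a::metric_space itself \<Rightarrow> ereal" where
  "lifschitz_char A = Sup {ereal c | c. c \<ge> 1 \<and> balls_regular A c}"

end

(* Fix k' strictly between max k 0 and the Lifschitz characteristic, together with the constants
   mu, alpha of the regularity of balls.  For a point y with bounded orbit let r(y) be the
   asymptotic radius of its orbit: the infimum of the t such that the tail of the orbit eventually
   lies in a ball of radius t.  If r(y) = 0 the orbit is Cauchy and its limit is fixed.  Otherwise
   regularity shows that a near-optimal centre z of the tail has its whole orbit within about r(y)
   of z, while r(y) is at most max alpha (1 - mu) times the radius of any ball around y containing
   the orbit of y.  Iterating yields centres whose orbit radii shrink geometrically; they converge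
   to a point p around which orbits of arbitrarily small radius crowd, and p is fixed. *)

theory Submission
  imports Defs
begin

lemma orbit_eq_range: "orbit T x = range (\<lambda>n. (T ^^ n) x)"
  unfolding orbit_def by (auto intro: range_eqI[of _ _ 0]) (metis funpow_0 Suc_leI neq0_conv)

lemma orbit_subset_cball_iff: "orbit T x \<subseteq> cball z r \<longleftrightarrow> (\<forall>n. dist z ((T ^^ n) x) \<le> r)"
  by (auto simp: orbit_eq_range image_subset_iff)

lemma orbit_iterate: "orbit T ((T ^^ m) x) = (\<lambda>n. (T ^^ n) x) ` {m..}"
proof -
  have "range (\<lambda>n. (T ^^ (n + m)) x) = (\<lambda>n. (T ^^ n) x) ` {m..}"
    by (force simp: image_iff le_iff_add add.commute)
  then show ?thesis by (simp add: orbit_eq_range funpow_add)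
qed

lemma Dsup_orbit_le_Dsup_orbit:
  assumes "orbit T y \<subseteq> cball x B" and "B \<le> dist x ((T ^^ j) x)"
  shows "Dsup x (orbit T y) \<le> Dsup x (orbit T x)"
proof -
  have "Dsup x (orbit T y) \<le> ereal B"
    using assms(1) unfolding Dsup_def by (auto intro!: SUP_least)
  also have "\<dots> \<le> ereal (dist x ((T ^^ j) x))"
    using assms(2) by simp
  also have "\<dots> \<le> Dsup x (orbit T x)"
    unfolding Dsup_def orbit_eq_range by (auto intro: SUP_upper)
  finally show ?thesis .
qed

lemma eventually_dist_iterate_le_if_lim_Dsup_le:
  assumes lim: "lim (\<lambda>m. Dsup ((T ^^ n) x) (orbit T ((T ^^ m) y))) \<le> ereal k * Dsup x (orbit T y)"
    and orbit: "orbit T y \<subseteq> cball x B" and "0 < \<epsilon>"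
  shows "\<forall>\<^sub>F a in sequentially. dist ((T ^^ n) x) ((T ^^ a) y) \<le> max k 0 * B + \<epsilon>"
proof -
  define f where "f m = (SUP a\<in>{m..}. ereal (dist ((T ^^ n) x) ((T ^^ a) y)))" for m
  have f_eq: "Dsup ((T ^^ n) x) (orbit T ((T ^^ m) y)) = f m" for m
    by (simp add: f_def Dsup_def orbit_iterate image_image)
  have "decseq f"
    unfolding decseq_def f_def by (auto intro: SUP_subset_mono)
  then have "lim f = (INF m. f m)"
    by (intro limI LIMSEQ_INF)
  have D_nonneg: "0 \<le> Dsup x (orbit T y)"
    unfolding Dsup_def orbit_def by (rule SUP_upper2[of y]) auto
  have D_le: "Dsup x (orbit T y) \<le> ereal B"
    using orbit unfolding Dsup_def by (auto intro!: SUP_least)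
  have "(INF m. f m) \<le> ereal k * Dsup x (orbit T y)"
    using lim \<open>lim f = (INF m. f m)\<close> f_eq by simp
  also have "\<dots> \<le> ereal (max k 0) * Dsup x (orbit T y)"
    using D_nonneg by (intro ereal_mult_right_mono) auto
  also have "\<dots> \<le> ereal (max k 0) * ereal B"
    using D_le by (intro ereal_mult_left_mono) (auto simp: le_max_iff_disj)
  also have "\<dots> = ereal (max k 0 * B)"
    by (rule times_ereal.simps(1))
  also have "\<dots> < ereal (max k 0 * B + \<epsilon>)"
    using \<open>0 < \<epsilon>\<close> by simp
  finally obtain m where m: "f m < ereal (max k 0 * B + \<epsilon>)"
    by (auto simp: INF_less_iff)
  have "dist ((T ^^ n) x) ((T ^^ a) y) \<le> max k 0 * B + \<epsilon>" if "m \<le> a" for a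
  proof -
    have "ereal (dist ((T ^^ n) x) ((T ^^ a) y)) \<le> f m"
      unfolding f_def using that by (intro SUP_upper) auto
    then have "ereal (dist ((T ^^ n) x) ((T ^^ a) y)) < ereal (max k 0 * B + \<epsilon>)"
      using m by (rule le_less_trans)
    then show ?thesis
      by simp
  qed
  then show ?thesis
    unfolding eventually_sequentially by blast
qed

definition asymptotic_radius :: "(nat \<Rightarrow> 'a::metric_space) \<Rightarrow> real" where
  "asymptotic_radius f = Inf {t. \<exists>z. \<forall>\<^sub>F n in sequentially. dist z (f n) \<le> t}"

lemma asymptotic_radius_le:
  assumes "\<forall>\<^sub>F n in sequentially. dist z (f n) \<le> t"
  shows "asymptotic_radius f \<le> t"
proof -
  have "0 \<le> s" if "\<forall>\<^sub>F n in sequentially. dist w (f n) \<le> s" for w s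
    using eventually_happens'[OF _ that] by (auto intro: order_trans[OF zero_le_dist])
  then have "bdd_below {t. \<exists>z. \<forall>\<^sub>F n in sequentially. dist z (f n) \<le> t}"
    by (auto intro: bdd_belowI[of _ 0])
  then show ?thesis
    unfolding asymptotic_radius_def using assms by (auto intro: cInf_lower)
qed

lemma asymptotic_radius_lessE:
  assumes "bounded (range f)" and "asymptotic_radius f < r"
  obtains z t where "\<forall>\<^sub>F n in sequentially. dist z (f n) \<le> t" and "t < r"
proof -
  obtain B where "\<forall>n. dist (f 0) (f n) \<le> B"
    using assms(1) bounded_any_center[of _ "f 0"] by auto
  then have "{t. \<exists>z. \<forall>\<^sub>F n in sequentially. dist z (f n) \<le> t} \<noteq> {}"
    by (auto intro!: exI[of _ B] exI[of _ "f 0"])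
  from cInf_lessD[OF this] assms(2) show ?thesis
    using that unfolding asymptotic_radius_def by blast
qed

lemma Cauchy_if_asymptotic_radius_nonpos:
  assumes "bounded (range f)" and "asymptotic_radius f \<le> 0"
  shows "Cauchy f"
proof (rule metric_CauchyI)
  fix e :: real
  assume "0 < e"
  then obtain z t where "\<forall>\<^sub>F n in sequentially. dist z (f n) \<le> t" "t < e / 2"
    using assms by (auto elim: asymptotic_radius_lessE[of f "e / 2"])
  then obtain M where M: "\<And>n. M \<le> n \<Longrightarrow> dist z (f n) \<le> t"
    by (auto simp: eventually_sequentially)
  have "dist (f m) (f n) < e" if "M \<le> m" "M \<le> n" for m n
    using dist_triangle3[of "f m" "f n" z] M[OF that(1)] M[OF that(2)] \<open>t < e / 2\<close> by linarith
  then show "\<exists>M. \<forall>m\<ge>M. \<forall>n\<ge>M. dist (f m) (f n) < e"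
    by blast
qed

lemma asymptotic_radius_le_if_eventually_in_balls:
  assumes "cball x r \<inter> cball x' r' \<subseteq> cball w s"
    and "\<forall>\<^sub>F n in sequentially. dist x (f n) \<le> r"
    and "\<forall>\<^sub>F n in sequentially. dist x' (f n) \<le> r'"
  shows "asymptotic_radius f \<le> s"
proof (rule asymptotic_radius_le)
  show "\<forall>\<^sub>F n in sequentially. dist w (f n) \<le> s"
    using assms(2,3) by eventually_elim (use assms(1) in auto)
qed

lemma Cauchy_if_dist_Suc_le_geometric:
  fixes f :: "nat \<Rightarrow> 'a::metric_space"
  assumes step: "\<And>n. dist (f n) (f (Suc n)) \<le> C * q ^ n" and "0 \<le> q" "q < 1"
  shows "Cauchy f"
proof -
  have tail: "dist (f n) (f (n + d)) \<le> C * (q ^ n - q ^ (n + d)) / (1 - q)" for n d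
  proof (induction d)
    case (Suc d)
    have "dist (f n) (f (n + Suc d)) \<le> dist (f n) (f (n + d)) + dist (f (n + d)) (f (n + Suc d))"
      by (rule dist_triangle)
    also have "\<dots> \<le> C * (q ^ n - q ^ (n + d)) / (1 - q) + C * q ^ (n + d)"
      using Suc.IH step[of "n + d"] by simp
    also have "\<dots> = C * (q ^ n - q ^ (n + Suc d)) / (1 - q)"
      using \<open>q < 1\<close> by (simp add: field_simps)
    finally show ?case .
  qed simp
  have "0 \<le> C"
    using order_trans[OF zero_le_dist step[of 0]] by simp
  have bound: "dist (f n) (f N) \<le> C * q ^ N / (1 - q)" if "N \<le> n" for n N
  proof -
    from \<open>N \<le> n\<close> obtain d where "n = N + d"
      using le_Suc_ex by blast
    then have "dist (f n) (f N) \<le> C * (q ^ N - q ^ (N + d)) / (1 - q)"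
      using tail[of N d] by (simp add: dist_commute)
    also have "\<dots> \<le> C * q ^ N / (1 - q)"
      using \<open>0 \<le> C\<close> \<open>0 \<le> q\<close> \<open>q < 1\<close> by (intro divide_right_mono mult_left_mono) auto
    finally show ?thesis .
  qed
  have "(\<lambda>N. C * q ^ N / (1 - q)) \<longlonglongrightarrow> 0"
    using \<open>0 \<le> q\<close> \<open>q < 1\<close> by (auto intro!: tendsto_eq_intros LIMSEQ_power_zero)
  then have "\<exists>N. C * q ^ N / (1 - q) < e" if "0 < e" for e
    using order_tendstoD(2)[OF _ that] eventually_happens'[of sequentially] by auto
  then show ?thesis
    unfolding Cauchy_altdef2 using bound by (meson le_less_trans)
qed

lemma shrinking_iteration:
  fixes P :: "'a::metric_space \<Rightarrow> real \<Rightarrow> bool"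
  assumes step: "\<And>y t. P y t \<Longrightarrow> \<exists>z t'. P z t' \<and> t' \<le> q * t \<and> dist y z \<le> C * t"
    and start: "P y\<^sub>0 t\<^sub>0" and "0 \<le> q"
  obtains xs ts where "\<And>n. P (xs n) (ts n)" "\<And>n. ts n \<le> q ^ n * t\<^sub>0"
    "\<And>n. dist (xs n) (xs (Suc n)) \<le> C * ts n"
proof -
  have "\<exists>zt'. (P (fst zt') (snd zt') \<and> snd zt' \<le> q ^ Suc n * t\<^sub>0) \<and> dist y (fst zt') \<le> C * t"
    if "P y t \<and> t \<le> q ^ n * t\<^sub>0" for y t n
  proof -
    from that step obtain z t' where "P z t'" "t' \<le> q * t" "dist y z \<le> C * t"
      by blast
    moreover have "q * t \<le> q ^ Suc n * t\<^sub>0"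
      using that \<open>0 \<le> q\<close> by (simp add: mult.assoc mult_left_mono)
    ultimately show ?thesis
      by (intro exI[of _ "(z, t')"]) auto
  qed
  then obtain s where "\<And>n. P (fst (s n)) (snd (s n)) \<and> snd (s n) \<le> q ^ n * t\<^sub>0"
    "\<And>n. dist (fst (s n)) (fst (s (Suc n))) \<le> C * snd (s n)"
    using dependent_nat_choice[of "\<lambda>n yt. P (fst yt) (snd yt) \<and> snd yt \<le> q ^ n * t\<^sub>0"
        "\<lambda>n yt zt'. dist (fst yt) (fst zt') \<le> C * snd yt"] start
    by force
  then show ?thesis
    using that[of "\<lambda>n. fst (s n)" "\<lambda>n. snd (s n)"] by blast
qed

lemma convergent_shrinking_iteration:
  fixes P :: "'a::complete_space \<Rightarrow> real \<Rightarrow> bool"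
  assumes step: "\<And>y t. P y t \<Longrightarrow> \<exists>z t'. P z t' \<and> t' \<le> q * t \<and> dist y z \<le> C * t"
    and start: "P y\<^sub>0 t\<^sub>0" and "0 < C" "0 \<le> q" "q < 1"
  obtains xs ts p where "\<And>n. P (xs n) (ts n)" "ts \<longlonglongrightarrow> 0" "xs \<longlonglongrightarrow> p"
proof -
  obtain xs ts where P: "\<And>n. P (xs n) (ts n)" and ts_le: "\<And>n. ts n \<le> q ^ n * t\<^sub>0"
    and dist_le: "\<And>n. dist (xs n) (xs (Suc n)) \<le> C * ts n"
    using shrinking_iteration[OF step start \<open>0 \<le> q\<close>] by blast
  have ts_nonneg: "0 \<le> ts n" for n
    using order_trans[OF zero_le_dist dist_le[of n]] \<open>0 < C\<close> by (simp add: zero_le_mult_iff)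
  have "(\<lambda>n. q ^ n * t\<^sub>0) \<longlonglongrightarrow> 0"
    using \<open>0 \<le> q\<close> \<open>q < 1\<close> by (auto intro!: tendsto_eq_intros LIMSEQ_power_zero)
  then have "ts \<longlonglongrightarrow> 0"
    using ts_le ts_nonneg by (intro tendsto_sandwich[of "\<lambda>_. 0" ts _ "\<lambda>n. q ^ n * t\<^sub>0"]) auto
  have "dist (xs n) (xs (Suc n)) \<le> (C * t\<^sub>0) * q ^ n" for n
  proof -
    have "dist (xs n) (xs (Suc n)) \<le> C * (q ^ n * t\<^sub>0)"
      using dist_le[of n] ts_le[of n] \<open>0 < C\<close> by (meson mult_left_mono less_imp_le order_trans)
    then show ?thesis
      by (simp add: ac_simps)
  qed
  then have "Cauchy xs"
    using \<open>0 \<le> q\<close> \<open>q < 1\<close> by (rule Cauchy_if_dist_Suc_le_geometric)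
  then obtain p where "xs \<longlonglongrightarrow> p"
    using Cauchy_convergent_iff convergent_def by blast
  then show ?thesis
    using that P \<open>ts \<longlonglongrightarrow> 0\<close> by blast
qed

locale regular_orbit_contraction =
  fixes T :: "'a::complete_space \<Rightarrow> 'a" and k k' \<mu> \<alpha> :: real
  assumes k_nonneg: "0 \<le> k" and k_less: "k < k'"
    and \<mu>_pos: "0 < \<mu>" and \<mu>_less_1: "\<mu> < 1" and \<alpha>_pos: "0 < \<alpha>" and \<alpha>_less_1: "\<alpha> < 1"
    and regular: "\<And>(x::'a) y r. 0 < r \<Longrightarrow> (1 - \<mu>) * r \<le> dist x y \<Longrightarrow>
      \<exists>z. cball x ((1 + \<mu>) * r) \<inter> cball y (k' * (1 + \<mu>) * r) \<subseteq> cball z (\<alpha> * r)"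
    and eventually_close: "\<And>x y n B \<epsilon>. 1 \<le> n \<Longrightarrow> Dsup x (orbit T y) \<le> Dsup x (orbit T x) \<Longrightarrow>
      orbit T y \<subseteq> cball x B \<Longrightarrow> 0 < \<epsilon> \<Longrightarrow>
      \<forall>\<^sub>F a in sequentially. dist ((T ^^ n) x) ((T ^^ a) y) \<le> k * B + \<epsilon>"
begin

abbreviation orbit_radius :: "'a \<Rightarrow> real" where
  "orbit_radius y \<equiv> asymptotic_radius (\<lambda>n. (T ^^ n) y)"

text \<open>Take an orbit within \<open>\<epsilon>\<close> of \<open>p\<close>, with \<open>\<epsilon>\<close> small against \<open>dist p (T p)\<close>: the hypothesis
  with \<open>n = 1\<close> puts \<open>T p\<close> within \<open>(k + 1) \<epsilon>\<close> of the tail of that orbit, hence within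
  \<open>(k + 2) \<epsilon>\<close> of \<open>p\<close>.\<close>

lemma fixed_point_if_orbits_near:
  assumes near: "\<And>\<epsilon>. 0 < \<epsilon> \<Longrightarrow> \<exists>w. orbit T w \<subseteq> cball p \<epsilon>"
  shows "T p = p"
proof (rule ccontr)
  assume "T p \<noteq> p"
  define \<delta> where "\<delta> = dist p (T p)"
  define \<epsilon> where "\<epsilon> = \<delta> / (k + 3)"
  have "0 < \<delta>"
    using \<open>T p \<noteq> p\<close> by (simp add: \<delta>_def)
  then have "0 < \<epsilon>" and \<delta>_eq: "\<delta> = (k + 3) * \<epsilon>"
    using k_nonneg by (simp_all add: \<epsilon>_def)
  then obtain w where w: "orbit T w \<subseteq> cball p \<epsilon>"
    using near by blast
  have "\<epsilon> \<le> dist p ((T ^^ 1) p)"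
    using \<delta>_eq \<open>0 < \<epsilon>\<close> k_nonneg by (simp add: \<delta>_def)
  then have "Dsup p (orbit T w) \<le> Dsup p (orbit T p)"
    using w by (rule Dsup_orbit_le_Dsup_orbit[rotated])
  then obtain a where "dist (T p) ((T ^^ a) w) \<le> k * \<epsilon> + \<epsilon>"
    using eventually_close[OF _ _ w \<open>0 < \<epsilon>\<close>, of 1] eventually_happens'[of sequentially] by auto
  moreover have "dist p ((T ^^ a) w) \<le> \<epsilon>"
    using w by (simp add: orbit_subset_cball_iff)
  ultimately have "\<delta> \<le> (k + 2) * \<epsilon>"
    using dist_triangle2[of p "T p" "(T ^^ a) w"] by (simp add: \<delta>_def algebra_simps)
  with \<delta>_eq \<open>0 < \<epsilon>\<close> show False
    by simp
qed

lemma orbit_limit_fixed: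
  assumes "(\<lambda>n. (T ^^ n) y) \<longlonglongrightarrow> p"
  shows "T p = p"
proof (rule fixed_point_if_orbits_near)
  fix \<epsilon> :: real
  assume "0 < \<epsilon>"
  then obtain N where N: "\<And>n. N \<le> n \<Longrightarrow> dist ((T ^^ n) y) p < \<epsilon>"
    using assms by (auto simp: lim_sequentially)
  have "dist p ((T ^^ n) ((T ^^ N) y)) \<le> \<epsilon>" for n
    using N[of "n + N"] by (simp add: funpow_add dist_commute)
  then show "\<exists>w. orbit T w \<subseteq> cball p \<epsilon>"
    by (auto simp: orbit_subset_cball_iff)
qed

text \<open>If the orbit of \<open>z\<close> left \<open>cball z t\<close>, the hypothesis would apply to \<open>z\<close> and the tail of
  the orbit of \<open>y\<close>; then every iterate of \<open>z\<close> stays \<open>(1 - \<mu>) r\<close>-close to \<open>z\<close>, since otherwise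
  regularity would trap that tail in a ball of radius \<open>\<alpha> r < r\<close>.\<close>

lemma orbit_within_if_near_tail:
  assumes r_pos: "0 < orbit_radius y"
    and near: "\<forall>\<^sub>F n in sequentially. dist z ((T ^^ n) y) \<le> t"
    and t_less: "t < (1 + \<mu>) * orbit_radius y"
  shows "orbit T z \<subseteq> cball z t"
proof (rule ccontr)
  let ?r = "orbit_radius y"
  assume "\<not> orbit T z \<subseteq> cball z t"
  then obtain n where far: "t < dist z ((T ^^ n) z)"
    by (auto simp: orbit_subset_cball_iff not_le)
  from near obtain m where m: "\<And>a. m \<le> a \<Longrightarrow> dist z ((T ^^ a) y) \<le> t"
    by (auto simp: eventually_sequentially)
  have "dist z ((T ^^ a) ((T ^^ m) y)) \<le> t" for a
    using m[of "a + m"] by (simp add: funpow_add)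
  then have tail: "orbit T ((T ^^ m) y) \<subseteq> cball z t"
    by (simp add: orbit_subset_cball_iff)
  have cond: "Dsup z (orbit T ((T ^^ m) y)) \<le> Dsup z (orbit T z)"
    using tail far by (intro Dsup_orbit_le_Dsup_orbit[of _ _ _ t n]) auto
  have "?r \<le> t"
    using near by (rule asymptotic_radius_le)
  have close: "dist z ((T ^^ j) z) < (1 - \<mu>) * ?r" if "1 \<le> j" for j
  proof (rule ccontr)
    assume "\<not> ?thesis"
    then obtain w where w: "cball z ((1 + \<mu>) * ?r) \<inter> cball ((T ^^ j) z) (k' * (1 + \<mu>) * ?r) \<subseteq> cball w (\<alpha> * ?r)"
      using regular[OF r_pos, of z "(T ^^ j) z"] by (auto simp: not_less)
    have "k * t \<le> k * ((1 + \<mu>) * ?r)"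
      using t_less k_nonneg by (simp add: mult_left_mono)
    also have "\<dots> < k' * (1 + \<mu>) * ?r"
      using k_less r_pos \<mu>_pos by simp
    finally have "0 < k' * (1 + \<mu>) * ?r - k * t"
      by simp
    from eventually_close[OF that cond tail this]
    have "\<forall>\<^sub>F a in sequentially. dist ((T ^^ j) z) ((T ^^ (a + m)) y) \<le> k' * (1 + \<mu>) * ?r"
      by (simp add: funpow_add)
    then have "\<forall>\<^sub>F a in sequentially. dist ((T ^^ j) z) ((T ^^ a) y) \<le> k' * (1 + \<mu>) * ?r"
      by (rule eventually_sequentially_seg[THEN iffD1])
    moreover have "\<forall>\<^sub>F a in sequentially. dist z ((T ^^ a) y) \<le> (1 + \<mu>) * ?r"
      using near by eventually_elim (use t_less in simp)
    ultimately have "?r \<le> \<alpha> * ?r"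
      by (intro asymptotic_radius_le_if_eventually_in_balls[OF w])
    with \<alpha>_less_1 r_pos show False
      by simp
  qed
  have "n \<noteq> 0"
    using far \<open>?r \<le> t\<close> r_pos by (cases n) auto
  then have "dist z ((T ^^ n) z) < (1 - \<mu>) * ?r"
    by (intro close) simp
  also have "\<dots> \<le> t"
    using \<open>?r \<le> t\<close> mult_pos_pos[OF \<mu>_pos r_pos] by (simp add: algebra_simps)
  finally show False
    using far by simp
qed

lemma orbit_radius_le:
  assumes orbit: "orbit T z \<subseteq> cball z R" and "0 < R"
  shows "orbit_radius z \<le> max \<alpha> (1 - \<mu>) * R"
proof -
  define s where "s = R / (1 + \<mu>)"
  have "0 < s" and R_eq: "R = (1 + \<mu>) * s" and "s \<le> R"
    using \<open>0 < R\<close> \<mu>_pos by (simp_all add: s_def field_simps)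
  show ?thesis
  proof (cases "\<exists>n\<ge>1. (1 - \<mu>) * s \<le> dist z ((T ^^ n) z)")
    case True
    then obtain n where "1 \<le> n" and far: "(1 - \<mu>) * s \<le> dist z ((T ^^ n) z)"
      by blast
    obtain w where w: "cball z ((1 + \<mu>) * s) \<inter> cball ((T ^^ n) z) (k' * (1 + \<mu>) * s) \<subseteq> cball w (\<alpha> * s)"
      using regular[OF \<open>0 < s\<close> far] by blast
    have "0 < (k' - k) * R"
      using k_less \<open>0 < R\<close> by simp
    from eventually_close[OF \<open>1 \<le> n\<close> order_refl orbit this]
    have "\<forall>\<^sub>F a in sequentially. dist ((T ^^ n) z) ((T ^^ a) z) \<le> k' * (1 + \<mu>) * s"
      by (simp add: R_eq algebra_simps)
    moreover have "\<forall>\<^sub>F a in sequentially. dist z ((T ^^ a) z) \<le> (1 + \<mu>) * s"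
      using orbit by (simp add: orbit_subset_cball_iff R_eq)
    ultimately have "orbit_radius z \<le> \<alpha> * s"
      by (intro asymptotic_radius_le_if_eventually_in_balls[OF w])
    also have "\<dots> \<le> max \<alpha> (1 - \<mu>) * R"
      using \<open>s \<le> R\<close> \<open>0 < s\<close> \<alpha>_pos by (intro mult_mono) auto
    finally show ?thesis .
  next
    case False
    have "dist z ((T ^^ n) z) \<le> (1 - \<mu>) * s" for n
    proof (cases "n = 0")
      case True
      then show ?thesis
        using \<mu>_less_1 \<open>0 < s\<close> by simp
    next
      case False
      then have "1 \<le> n"
        by simp
      then have "\<not> (1 - \<mu>) * s \<le> dist z ((T ^^ n) z)"
        using \<open>\<not> (\<exists>n\<ge>1. (1 - \<mu>) * s \<le> dist z ((T ^^ n) z))\<close> by blast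
      then show ?thesis
        by simp
    qed
    then have "orbit_radius z \<le> (1 - \<mu>) * s"
      by (intro asymptotic_radius_le[of z]) simp
    also have "\<dots> \<le> max \<alpha> (1 - \<mu>) * R"
      using \<open>s \<le> R\<close> \<open>0 < s\<close> \<mu>_less_1 by (intro mult_mono) auto
    finally show ?thesis .
  qed
qed

lemma smaller_orbit_ball_nearby:
  assumes no_fixed: "\<nexists>p. T p = p" and orbit: "orbit T y \<subseteq> cball y t"
  shows "\<exists>z t'. orbit T z \<subseteq> cball z t' \<and> t' \<le> (1 + max \<alpha> (1 - \<mu>)) / 2 * t \<and> dist y z \<le> 2 * t"
proof -
  let ?r = "orbit_radius y" and ?\<beta> = "max \<alpha> (1 - \<mu>)"
  have "0 < dist y (T y)"
    using no_fixed by (metis zero_less_dist_iff)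
  also have "\<dots> \<le> t"
    using orbit by (auto simp: orbit_subset_cball_iff dest: spec[of _ 1])
  finally have "0 < t" .
  have bounded: "bounded (range (\<lambda>n. (T ^^ n) y))"
    using orbit by (simp add: orbit_eq_range bounded_subset[OF bounded_cball])
  have "0 < ?r"
  proof (rule ccontr)
    assume "\<not> 0 < ?r"
    then have "Cauchy (\<lambda>n. (T ^^ n) y)"
      using bounded by (intro Cauchy_if_asymptotic_radius_nonpos) auto
    then obtain p where "(\<lambda>n. (T ^^ n) y) \<longlonglongrightarrow> p"
      using Cauchy_convergent_iff convergent_def by blast
    then show False
      using orbit_limit_fixed no_fixed by blast
  qed
  have "?\<beta> < 1"
    using \<alpha>_less_1 \<mu>_pos by simp
  have "?r \<le> ?\<beta> * t"
    using orbit_radius_le[OF orbit \<open>0 < t\<close>] .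
  also have "\<dots> < (1 + ?\<beta>) / 2 * t"
    using \<open>?\<beta> < 1\<close> \<open>0 < t\<close> by (simp add: field_simps)
  finally have "?r < min ((1 + \<mu>) * ?r) ((1 + ?\<beta>) / 2 * t)"
    using \<open>0 < ?r\<close> \<mu>_pos by simp
  then obtain z t' where near: "\<forall>\<^sub>F n in sequentially. dist z ((T ^^ n) y) \<le> t'"
    and t': "t' < min ((1 + \<mu>) * ?r) ((1 + ?\<beta>) / 2 * t)"
    using asymptotic_radius_lessE[OF bounded] by blast
  have z_orbit: "orbit T z \<subseteq> cball z t'"
    using t' by (intro orbit_within_if_near_tail[OF \<open>0 < ?r\<close> near]) simp
  obtain m where "dist z ((T ^^ m) y) \<le> t'"
    using eventually_happens'[OF _ near] by auto
  moreover have "dist y ((T ^^ m) y) \<le> t"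
    using orbit by (simp add: orbit_subset_cball_iff)
  ultimately have "dist y z \<le> t + t'"
    using dist_triangle2[of y z "(T ^^ m) y"] by linarith
  moreover have "(1 + ?\<beta>) / 2 * t \<le> t"
    using \<open>?\<beta> < 1\<close> \<open>0 < t\<close> by (simp add: field_simps)
  ultimately show ?thesis
    using z_orbit t' by (intro exI[of _ z] exI[of _ t']) auto
qed

lemma fixed_point_if_bounded_orbit:
  assumes "bounded (orbit T x)"
  shows "\<exists>p. T p = p"
proof (rule ccontr)
  assume no_fixed: "\<nexists>p. T p = p"
  obtain B where "orbit T x \<subseteq> cball x B"
    using assms bounded_any_center[of _ x] by (auto simp: subset_iff)
  moreover have "0 \<le> (1 + max \<alpha> (1 - \<mu>)) / 2" "(1 + max \<alpha> (1 - \<mu>)) / 2 < 1"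
    using \<alpha>_pos \<alpha>_less_1 \<mu>_pos by auto
  ultimately obtain xs ts p where orbits: "\<And>n. orbit T (xs n) \<subseteq> cball (xs n) (ts n)"
    and "ts \<longlonglongrightarrow> 0" and "xs \<longlonglongrightarrow> p"
    using convergent_shrinking_iteration[of "\<lambda>y t. orbit T y \<subseteq> cball y t"]
      smaller_orbit_ball_nearby[OF no_fixed] by (metis zero_less_numeral)
  have "T p = p"
  proof (rule fixed_point_if_orbits_near)
    fix \<epsilon> :: real
    assume "0 < \<epsilon>"
    then have "\<forall>\<^sub>F n in sequentially. dist (xs n) p < \<epsilon> / 2 \<and> ts n < \<epsilon> / 2"
      using tendstoD[OF \<open>xs \<longlonglongrightarrow> p\<close>, of "\<epsilon> / 2"] order_tendstoD(2)[OF \<open>ts \<longlonglongrightarrow> 0\<close>, of "\<epsilon> / 2"]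
      by (auto intro: eventually_conj)
    then obtain n where "dist (xs n) p < \<epsilon> / 2" "ts n < \<epsilon> / 2"
      using eventually_happens'[of sequentially] by auto
    have "cball (xs n) (ts n) \<subseteq> cball p \<epsilon>"
    proof
      fix v
      assume "v \<in> cball (xs n) (ts n)"
      then show "v \<in> cball p \<epsilon>"
        using dist_triangle3[of p v "xs n"] \<open>dist (xs n) p < \<epsilon> / 2\<close> \<open>ts n < \<epsilon> / 2\<close> by simp
    qed
    then show "\<exists>w. orbit T w \<subseteq> cball p \<epsilon>"
      using orbits by blast
  qed
  with no_fixed show False
    by blast
qed

end

theorem corollary4p4:
  fixes T :: "'a::complete_space \<Rightarrow> 'a" and k :: real
  assumes "ereal k < lifschitz_char TYPE('a)"
    and "\<And>x y n. Dsup x (orbit T y) \<le> Dsup x (orbit T x) \<Longrightarrow> n \<ge> 1 \<Longrightarrow>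
           lim (\<lambda>m. Dsup ((T ^^ n) x) (orbit T ((T ^^ m) y))) \<le> ereal k * Dsup x (orbit T y)"
  shows "(\<forall>x. \<not> bounded (orbit T x)) \<or> (\<exists>x. T x = x)"
proof -
  obtain c where "1 \<le> c" and c_regular: "balls_regular TYPE('a) c" and "k < c"
    using assms(1) unfolding lifschitz_char_def less_Sup_iff by auto
  define k' where "k' = (max k 0 + c) / 2"
  have "max k 0 < k'" and "k' < c"
    using \<open>k < c\<close> \<open>1 \<le> c\<close> by (auto simp: k'_def)
  from c_regular \<open>k' < c\<close> obtain \<mu> \<alpha> where "0 < \<mu>" "\<mu> < 1" "0 < \<alpha>" "\<alpha> < 1"
    and regular: "\<forall>(x::'a) y r. r > 0 \<and> dist x y \<ge> (1 - \<mu>) * r \<longrightarrow>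
      (\<exists>z. cball x ((1 + \<mu>) * r) \<inter> cball y (k' * (1 + \<mu>) * r) \<subseteq> cball z (\<alpha> * r))"
    unfolding balls_regular_def by blast
  interpret regular_orbit_contraction T "max k 0" k' \<mu> \<alpha>
  proof
    fix x y :: 'a and n :: nat and B \<epsilon> :: real
    show "\<forall>\<^sub>F a in sequentially. dist ((T ^^ n) x) ((T ^^ a) y) \<le> max k 0 * B + \<epsilon>"
      if "1 \<le> n" "Dsup x (orbit T y) \<le> Dsup x (orbit T x)" "orbit T y \<subseteq> cball x B" "0 < \<epsilon>"
      using that by (intro eventually_dist_iterate_le_if_lim_Dsup_le assms(2))
  qed (use \<open>0 < \<mu>\<close> \<open>\<mu> < 1\<close> \<open>0 < \<alpha>\<close> \<open>\<alpha> < 1\<close> \<open>max k 0 < k'\<close> regular in auto)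
  show ?thesis
    using fixed_point_if_bounded_orbit by blast
qed

end
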